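(* Let $\mathcal{A}$ be a set of $N$ arms and $1\le B\le N$. In the full feedback setting, any randomized algorithm that selects $B$ arms per round has worst-case expected regret \[R_T^*\ge\Omega\left(\left(\tfrac14\right)^B(\log_2(N)-\log_2(B))\right)\quad\text{for }T\ge\Omega(\log_2(N)-\log_2(B)).\]
   Context: In each round $t=1,\dots,T$ an oblivious adversary fixes $c_t:\mathcal{A}\to[0,1]$; the algorithm picks $S_t\subset\mathcal{A}$ with $|S_t|=B$ and incurs cost $c_t(S_t):=\min_{a\in S_t}c_t(a)$; then $c_t$ is revealed (full feedback). $R_T^*(\mathbf{ALG}):=\max_{c_1,\dots,c_T}\mathbb{E}\left[\sum_{t=1}^T c_t(S_t)-\min_{a^*\in\mathcal{A}}\sum_{t=1}^T c_t(a^* )\right]$, expectation over the algorithm's randomness. *)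

theory Defs
  imports "HOL-Probability.Probability"
begin

text \<open>An adversary is a sequence of cost functions
  (round t = 0,1,...), fixed in advance (oblivious).\<close>

definition valid_cost :: "nat set \<Rightarrow> (nat \<Rightarrow> real) \<Rightarrow> bool" where
  "valid_cost A c \<longleftrightarrow> (\<forall>a\<in>A. 0 \<le> c a \<and> c a \<le> 1)"

text \<open>A randomized full-feedback algorithm: given the history of revealed
  cost functions c_1..c_(t-1) (a list of length t-1), it outputs the
  distribution of the chosen set S_t. Against an oblivious adversary the
  expected cost depends only on these per-round laws.\<close>

definition valid_alg :: "nat set \<Rightarrow> nat \<Rightarrow> ((nat \<Rightarrow> real) list \<Rightarrow> nat set pmf) \<Rightarrow> bool" where
  "valid_alg A B alg \<longleftrightarrow> (\<forall>h. set_pmf (alg h) \<subseteq> {S. S \<subseteq> A \<and> card S = B})"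

definition regret :: "nat set \<Rightarrow> ((nat \<Rightarrow> real) list \<Rightarrow> nat set pmf) \<Rightarrow> nat
    \<Rightarrow> (nat \<Rightarrow> nat \<Rightarrow> real) \<Rightarrow> real" where
  "regret A alg T cs =
     (\<Sum>t<T. measure_pmf.expectation (alg (map cs [0..<t])) (\<lambda>S. Min (cs t ` S)))
     - Min ((\<lambda>a. \<Sum>t<T. cs t a) ` A)"

definition worst_regret :: "nat set \<Rightarrow> ((nat \<Rightarrow> real) list \<Rightarrow> nat set pmf) \<Rightarrow> nat \<Rightarrow> real" where
  "worst_regret A alg T =
     (SUP cs \<in> {cs. \<forall>t. valid_cost A (cs t)}. regret A alg T cs)"

end

theory Submission
  imports Defs
begin

text \<open>Knowing the algorithm (but not its random choices, so the costs are oblivious), the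
  adversary fixes the costs round by round while keeping a set of candidate arms that have
  cost 0 so far. It splits the candidates into K blocks; a set of B arms meets at most B of
  them, so under the algorithm's current law some block is missed with probability at least
  (K - B)/K. The adversary charges 0 on that block and 1 elsewhere, and continues with the
  block as its new candidate set. After k rounds, with K^k \<le> N, some arm has total cost 0
  while the algorithm has paid at least k(K - B)/K in expectation. Choosing K = 2B and
  k = \<lfloor>log N / log (2B)\<rfloor>, or K = B + 1 and k = 1 when N < 2B, gives the bound.\<close>

lemma valid_alg_support:
  assumes "valid_alg A B alg" "1 \<le> B" "S \<in> set_pmf (alg h)"
  shows "S \<subseteq> A" "card S = B" "finite S" "S \<noteq> {}"
proof -
  show "S \<subseteq> A" "card S = B"
    using assms(1,3) unfolding valid_alg_def by blast+
  then have "0 < card S"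
    using assms(2) by simp
  then show "finite S" "S \<noteq> {}"
    by (auto simp: card_gt_0_iff)
qed

lemma Min_of_bool_notin:
  assumes "finite S" "S \<noteq> {}"
  shows "Min ((\<lambda>a. of_bool (a \<notin> G) :: real) ` S) = of_bool (S \<inter> G = {})"
proof (cases "S \<inter> G = {}")
  case True
  then have "(\<lambda>a. of_bool (a \<notin> G) :: real) ` S = {1}"
    using assms(2) by auto (auto intro!: image_eqI)
  with True show ?thesis by simp
next
  case False
  then have "0 \<in> (\<lambda>a. of_bool (a \<notin> G) :: real) ` S" by auto
  with False assms show ?thesis by (intro Min_eqI) auto
qed

lemma card_blocks_meeting_le:
  assumes "finite S" "disjoint_family_on G D"
  shows "card {d\<in>D. S \<inter> G d \<noteq> {}} \<le> card S"
  using assms by (intro card_le_if_inj_on_rel[where r = "\<lambda>d a. a \<in> G d"])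
    (auto simp: disjoint_family_on_def)

lemma exists_block_often_missed:
  fixes \<mu> :: "'a set pmf" and G :: "nat \<Rightarrow> 'a set"
  assumes "\<And>S. S \<in> set_pmf \<mu> \<Longrightarrow> finite S \<and> card S \<le> B" "1 \<le> K"
    "disjoint_family_on G {..<K}"
  shows "\<exists>d<K. (real K - real B) / real K \<le> measure_pmf.expectation \<mu> (\<lambda>S. of_bool (S \<inter> G d = {}))"
proof (rule ccontr)
  assume all_small: "\<not> ?thesis"
  have int: "integrable (measure_pmf \<mu>) (\<lambda>S. of_bool (P S) :: real)" for P
    by (rule measure_pmf.integrable_const_bound[where B = 1]) auto
  have "(\<Sum>d<K. measure_pmf.expectation \<mu> (\<lambda>S. of_bool (S \<inter> G d = {})))
      < (\<Sum>d<K. (real K - real B) / real K)"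
    using all_small \<open>1 \<le> K\<close> by (intro sum_strict_mono) (auto simp: not_le lessThan_empty_iff)
  also have "\<dots> = real K - real B"
    using \<open>1 \<le> K\<close> by simp
  also have "\<dots> \<le> measure_pmf.expectation \<mu> (\<lambda>S. \<Sum>d<K. of_bool (S \<inter> G d = {}))"
  proof (rule measure_pmf.integral_ge_const)
    show "integrable (measure_pmf \<mu>) (\<lambda>S. \<Sum>d<K. of_bool (S \<inter> G d = {}) :: real)"
      by (intro Bochner_Integration.integrable_sum int)
    show "AE S in measure_pmf \<mu>. real K - real B \<le> (\<Sum>d<K. of_bool (S \<inter> G d = {}))"
    proof (rule AE_pmfI)
      fix S assume "S \<in> set_pmf \<mu>"
      then have "card {d\<in>{..<K}. S \<inter> G d \<noteq> {}} \<le> B"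
        using assms(1) card_blocks_meeting_le[OF _ assms(3)] le_trans by blast
      moreover have "(\<Sum>d<K. of_bool (S \<inter> G d = {}) :: real)
          = (\<Sum>d<K. 1 - of_bool (S \<inter> G d \<noteq> {}))"
        by (intro sum.cong) auto
      then have "(\<Sum>d<K. of_bool (S \<inter> G d = {}) :: real)
          = real K - real (card {d\<in>{..<K}. S \<inter> G d \<noteq> {}})"
        by (simp add: sum_subtractf sum.If_cases Int_def)
      ultimately show "real K - real B \<le> (\<Sum>d<K. of_bool (S \<inter> G d = {}))"
        by linarith
    qed
  qed
  also have "\<dots> = (\<Sum>d<K. measure_pmf.expectation \<mu> (\<lambda>S. of_bool (S \<inter> G d = {})))"
    by (intro Bochner_Integration.integral_sum int)
  finally show False by simp
qed

lemma disjoint_subsets_of_card: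
  assumes "finite X" "K * m \<le> card X"
  obtains G :: "nat \<Rightarrow> 'a set"
  where "disjoint_family_on G {..<K}" "\<And>d. d < K \<Longrightarrow> G d \<subseteq> X \<and> card (G d) = m"
proof -
  obtain f where f: "bij_betw f {0..<card X} X"
    using ex_bij_betw_nat_finite[OF assms(1)] by blast
  define I where "I d = {d * m..<d * m + m}" for d
  have I_sub: "I d \<subseteq> {0..<card X}" if "d < K" for d
  proof -
    have "d * m + m \<le> K * m"
      using that by (metis add.commute mult_Suc mult_le_mono1 Suc_leI)
    with assms(2) show ?thesis by (auto simp: I_def)
  qed
  have I_disj: "I d \<inter> I d' = {}" if "d \<noteq> d'" for d d'
  proof -
    have "d * m + m \<le> d' * m \<or> d' * m + m \<le> d * m"
      using that by (metis add.commute mult_Suc mult_le_mono1 Suc_leI nat_neq_iff)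
    then show ?thesis by (auto simp: I_def)
  qed
  have inj: "inj_on f {0..<card X}"
    using f by (rule bij_betw_imp_inj_on)
  show ?thesis
  proof
    show "disjoint_family_on (\<lambda>d. f ` I d) {..<K}"
      unfolding disjoint_family_on_def
      using I_sub I_disj inj by (auto simp flip: inj_on_image_Int)
    fix d assume "d < K"
    then have "f ` I d \<subseteq> X" "card (f ` I d) = card (I d)"
      using I_sub f inj_on_subset[OF inj] by (auto simp: bij_betw_def card_image)
    then show "f ` I d \<subseteq> X \<and> card (f ` I d) = m"
      by (simp add: I_def)
  qed
qed

definition expected_cost :: "(('a \<Rightarrow> real) list \<Rightarrow> 'a set pmf) \<Rightarrow> ('a \<Rightarrow> real) list \<Rightarrow> ('a \<Rightarrow> real) list \<Rightarrow> real"
  where "expected_cost alg h cs =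
    (\<Sum>s<length cs. measure_pmf.expectation (alg (h @ take s cs)) (\<lambda>S. Min ((cs ! s) ` S)))"

lemma expected_cost_Cons:
  "expected_cost alg h (c # cs)
    = measure_pmf.expectation (alg h) (\<lambda>S. Min (c ` S)) + expected_cost alg (h @ [c]) cs"
  unfolding expected_cost_def length_Cons sum.lessThan_Suc_shift by simp

lemma adversarial_costs_exist:
  assumes alg: "valid_alg A B alg" and "1 \<le> B" "1 \<le> K" "K ^ k \<le> card X"
  shows "\<exists>cs a. length cs = k \<and> a \<in> X \<and> (\<forall>c\<in>set cs. valid_cost A c \<and> c a = 0) \<and>
    real k * (real K - real B) / real K \<le> expected_cost alg h cs"
  using assms(4)
proof (induction k arbitrary: X h)
  case 0
  then obtain a where "a \<in> X"
    by (metis card.empty ex_in_conv not_one_le_zero power_0)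
  then show ?case
    by (auto simp: expected_cost_def)
next
  case (Suc k)
  have "0 < K ^ Suc k"
    using \<open>1 \<le> K\<close> by simp
  then have "finite X"
    using Suc.prems by (intro card_ge_0_finite) linarith
  moreover have "K * K ^ k \<le> card X"
    using Suc.prems by simp
  ultimately obtain G where G_disj: "disjoint_family_on G {..<K}"
    and G: "\<And>d. d < K \<Longrightarrow> G d \<subseteq> X \<and> card (G d) = K ^ k"
    using disjoint_subsets_of_card by metis
  have supp: "finite S \<and> S \<noteq> {} \<and> card S = B" if "S \<in> set_pmf (alg h)" for S
    using valid_alg_support[OF alg \<open>1 \<le> B\<close> that] by blast
  have "\<exists>d<K. (real K - real B) / real K
      \<le> measure_pmf.expectation (alg h) (\<lambda>S. of_bool (S \<inter> G d = {}))"
    using supp by (intro exists_block_often_missed[OF _ \<open>1 \<le> K\<close> G_disj]) simp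
  then obtain d where "d < K" and d_missed:
    "(real K - real B) / real K \<le> measure_pmf.expectation (alg h) (\<lambda>S. of_bool (S \<inter> G d = {}))"
    by blast
  define c where "c a = (of_bool (a \<notin> G d) :: real)" for a
  have "K ^ k \<le> card (G d)"
    using G[OF \<open>d < K\<close>] by simp
  then obtain cs a where cs: "length cs = k" "a \<in> G d" "\<forall>c\<in>set cs. valid_cost A c \<and> c a = 0"
    and cs_cost: "real k * (real K - real B) / real K \<le> expected_cost alg (h @ [c]) cs"
    using Suc.IH[of "G d" "h @ [c]"] by blast
  have "measure_pmf.expectation (alg h) (\<lambda>S. Min (c ` S))
      = measure_pmf.expectation (alg h) (\<lambda>S. of_bool (S \<inter> G d = {}))"
  proof (rule integral_cong_AE)
    show "AE S in alg h. Min (c ` S) = of_bool (S \<inter> G d = {})"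
      using supp by (simp add: AE_measure_pmf_iff c_def Min_of_bool_notin)
  qed simp_all
  moreover have "real (Suc k) * (real K - real B) / real K
      = (real K - real B) / real K + real k * (real K - real B) / real K"
    by (simp add: add_divide_distrib distrib_right)
  ultimately have cost_bound: "real (Suc k) * (real K - real B) / real K \<le> expected_cost alg h (c # cs)"
    unfolding expected_cost_Cons using d_missed cs_cost by linarith
  show ?case
  proof (intro exI[of _ "c # cs"] exI[of _ a] conjI)
    show "length (c # cs) = Suc k" "a \<in> X"
      using cs(1,2) G[OF \<open>d < K\<close>] by auto
    have "valid_cost A c" "c a = 0"
      using cs(2) by (auto simp: valid_cost_def c_def)
    then show "\<forall>c'\<in>set (c # cs). valid_cost A c' \<and> c' a = 0"
      using cs(3) by simp
  qed (fact cost_bound)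
qed

lemma expected_min_cost_bounds:
  assumes alg: "valid_alg A B alg" and "1 \<le> B" "valid_cost A c"
  shows "0 \<le> measure_pmf.expectation (alg h) (\<lambda>S. Min (c ` S))"
    and "measure_pmf.expectation (alg h) (\<lambda>S. Min (c ` S)) \<le> 1"
proof -
  have bounds: "0 \<le> Min (c ` S) \<and> Min (c ` S) \<le> 1" if "S \<in> set_pmf (alg h)" for S
  proof -
    note S = valid_alg_support[OF alg \<open>1 \<le> B\<close> that]
    then have "Min (c ` S) \<in> c ` S"
      by (intro Min_in) auto
    with S(1) \<open>valid_cost A c\<close> show ?thesis
      by (auto simp: valid_cost_def)
  qed
  then show "0 \<le> measure_pmf.expectation (alg h) (\<lambda>S. Min (c ` S))"
    by (intro integral_nonneg_AE) (simp add: AE_measure_pmf_iff)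
  show "measure_pmf.expectation (alg h) (\<lambda>S. Min (c ` S)) \<le> 1"
  proof (rule measure_pmf.integral_le_const)
    show "integrable (measure_pmf (alg h)) (\<lambda>S. Min (c ` S))"
      using bounds by (intro measure_pmf.integrable_const_bound[where B = 1]) (auto simp: AE_measure_pmf_iff)
  qed (use bounds in \<open>simp add: AE_measure_pmf_iff\<close>)
qed

lemma regret_le_horizon:
  assumes alg: "valid_alg A B alg" and "1 \<le> B" "finite A" "A \<noteq> {}"
    and costs: "\<And>t. valid_cost A (cs t)"
  shows "regret A alg T cs \<le> real T"
proof -
  have "(\<Sum>t<T. measure_pmf.expectation (alg (map cs [0..<t])) (\<lambda>S. Min (cs t ` S))) \<le> (\<Sum>t<T. 1)"
    by (intro sum_mono expected_min_cost_bounds(2)[OF alg \<open>1 \<le> B\<close> costs])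
  moreover have "0 \<le> Min ((\<lambda>a. \<Sum>t<T. cs t a) ` A)"
    using costs \<open>finite A\<close> \<open>A \<noteq> {}\<close> by (auto simp: valid_cost_def intro: sum_nonneg)
  ultimately show ?thesis
    unfolding regret_def by simp
qed

lemma regret_le_worst_regret:
  assumes "valid_alg A B alg" "1 \<le> B" "finite A" "A \<noteq> {}" "\<And>t. valid_cost A (cs t)"
  shows "regret A alg T cs \<le> worst_regret A alg T"
  unfolding worst_regret_def
proof (rule cSUP_upper)
  show "cs \<in> {cs. \<forall>t. valid_cost A (cs t)}"
    using assms(5) by simp
  show "bdd_above (regret A alg T ` {cs. \<forall>t. valid_cost A (cs t)})"
    using regret_le_horizon[OF assms(1-4)] by (intro bdd_aboveI[where M = "real T"]) auto
qed

lemma worst_regret_ge_rounds: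
  assumes alg: "valid_alg A B alg" and "finite A" "1 \<le> B" "1 \<le> K" "K ^ k \<le> card A" "k \<le> T"
  shows "real k * (real K - real B) / real K \<le> worst_regret A alg T"
proof -
  obtain cs a where cs: "length cs = k" "a \<in> A" "\<forall>c\<in>set cs. valid_cost A c \<and> c a = 0"
    and cs_cost: "real k * (real K - real B) / real K \<le> expected_cost alg [] cs"
    using adversarial_costs_exist[OF alg \<open>1 \<le> B\<close> \<open>1 \<le> K\<close> \<open>K ^ k \<le> card A\<close>] by blast
  define costs where "costs t = (if t < k then cs ! t else (\<lambda>_. 0))" for t
  have valid: "valid_cost A (costs t)" for t
    using cs(1,3) by (auto simp: costs_def valid_cost_def)
  have history: "map costs [0..<t] = take t cs" if "t \<le> k" for t
    using that cs(1) by (intro nth_equalityI) (auto simp: costs_def)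
  let ?E = "\<lambda>t. measure_pmf.expectation (alg (map costs [0..<t])) (\<lambda>S. Min (costs t ` S))"
  have "real k * (real K - real B) / real K \<le> (\<Sum>t<k. ?E t)"
    using cs_cost cs(1) by (simp add: expected_cost_def history costs_def)
  also have "\<dots> \<le> (\<Sum>t<T. ?E t)"
    using \<open>k \<le> T\<close> expected_min_cost_bounds(1)[OF alg \<open>1 \<le> B\<close> valid]
    by (intro sum_mono2) auto
  also have "\<dots> \<le> regret A alg T costs"
  proof -
    have "(\<Sum>t<T. costs t a) = 0"
      using cs by (intro sum.neutral) (auto simp: costs_def)
    then have "Min ((\<lambda>a. \<Sum>t<T. costs t a) ` A) \<le> 0"
      using \<open>finite A\<close> cs(2) by (metis Min_le finite_imageI image_eqI)
    then show ?thesis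
      unfolding regret_def by simp
  qed
  also have "\<dots> \<le> worst_regret A alg T"
    using cs(2) by (intro regret_le_worst_regret[OF alg \<open>1 \<le> B\<close> \<open>finite A\<close> _ valid]) auto
  finally show ?thesis .
qed

lemma worst_regret_nonneg:
  assumes "valid_alg A B alg" "finite A" "1 \<le> B" "A \<noteq> {}"
  shows "0 \<le> worst_regret A alg T"
  using worst_regret_ge_rounds[OF assms(1-3), of 1 0] assms(2,4)
  by (simp add: Suc_le_eq card_gt_0_iff)

lemma two_mult_add_two_le_four_power: "2 * (real n + 2) \<le> 4 ^ Suc n"
proof (induction n)
  case (Suc n)
  have "1 \<le> (4::real) ^ Suc n"
    by (intro one_le_power) simp
  with Suc.IH show ?case
    by simp
qed simp

lemma worst_regret_ge_log_few_arms:
  assumes alg: "valid_alg A B alg" and "finite A" "1 \<le> B" "B < card A" "card A < 2 * B"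
    and T: "log 2 (card A / B) \<le> real T"
  shows "(1/4) ^ Suc B * log 2 (card A / B) \<le> worst_regret A alg T"
proof -
  have "1 < card A / B" "card A / B < 2"
    using assms(3-5) by (simp_all add: divide_simps)
  then have log_pos: "0 < log 2 (card A / B)" and log_lt1: "log 2 (card A / B) < 1"
    by (simp_all add: log_less_iff)
  then have "1 \<le> T"
    using T by linarith
  then have "real 1 * (real (B + 1) - real B) / real (B + 1) \<le> worst_regret A alg T"
    using assms(4) by (intro worst_regret_ge_rounds[OF alg \<open>finite A\<close> \<open>1 \<le> B\<close>]) auto
  then have "1 / real (B + 1) \<le> worst_regret A alg T"
    by simp
  moreover have "real (B + 1) \<le> 4 ^ Suc B"
    using two_mult_add_two_le_four_power[of B] by simp
  then have "(1/4) ^ Suc B \<le> 1 / real (B + 1)"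
    by (simp add: power_one_over divide_simps)
  moreover have "(1/4) ^ Suc B * log 2 (card A / B) \<le> (1/4) ^ Suc B"
    using log_lt1 by (simp add: mult_left_le)
  ultimately show ?thesis
    by linarith
qed

lemma worst_regret_ge_log_many_arms:
  assumes alg: "valid_alg A B alg" and "finite A" "1 \<le> B" "2 * B \<le> card A"
    and T: "log 2 (card A / B) \<le> real T"
  shows "(1/4) ^ Suc B * log 2 (card A / B) \<le> worst_regret A alg T"
proof -
  obtain k where k_low: "(2 * B) ^ k \<le> card A" and k_up: "card A < (2 * B) ^ (k + 1)"
    using ex_power_ivl1[of "2 * B" "card A"] assms(3,4) by auto
  have "1 \<le> k"
    using k_up assms(4) by (cases k) auto
  have "2 ^ k * B \<le> card A"
  proof -
    have "B \<le> B ^ k"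
      using \<open>1 \<le> B\<close> \<open>1 \<le> k\<close> by (simp add: self_le_power)
    then have "2 ^ k * B \<le> (2 * B) ^ k"
      by (simp add: power_mult_distrib)
    with k_low show ?thesis
      by linarith
  qed
  then have "2 ^ k * real B \<le> real (card A)"
    by (metis of_nat_le_iff of_nat_mult of_nat_numeral of_nat_power)
  then have "2 ^ k \<le> card A / B"
    using \<open>1 \<le> B\<close> by (simp add: le_divide_eq)
  then have k_le_log: "real k \<le> log 2 (card A / B)"
    using log_mono[of 2 "2 ^ k" "card A / B"] by simp
  have "card A < 2 ^ (k + 1 + B * k) * B"
  proof -
    have "B ^ k \<le> 2 ^ (B * k)"
      using less_exp[of B] by (simp add: power_mult power_mono)
    then have "(2 * B) ^ (k + 1) \<le> 2 ^ (k + 1 + B * k) * B"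
      by (simp add: power_mult_distrib power_add)
    with k_up show ?thesis
      by linarith
  qed
  then have "real (card A) < 2 ^ (k + 1 + B * k) * real B"
    by (metis of_nat_less_iff of_nat_mult of_nat_numeral of_nat_power)
  then have "card A / B < 2 ^ (k + 1 + B * k)"
    using \<open>1 \<le> B\<close> by (simp add: divide_less_eq)
  moreover have "0 < card A / B"
    using assms(3,4) by simp
  ultimately have "log 2 (card A / B) < log 2 (2 ^ (k + 1 + B * k))"
    by (intro log_less) simp_all
  then have "log 2 (card A / B) < real (k + 1 + B * k)"
    by (subst (asm) log_pow_cancel) simp_all
  then have log_le: "log 2 (card A / B) \<le> real k * (real B + 2)"
    using \<open>1 \<le> k\<close> by (simp add: algebra_simps)
  have "real k * (real (2 * B) - real B) / real (2 * B) \<le> worst_regret A alg T"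
    using k_low k_le_log T \<open>1 \<le> B\<close>
    by (intro worst_regret_ge_rounds[OF alg \<open>finite A\<close> \<open>1 \<le> B\<close>]) auto
  moreover have "real k * (real (2 * B) - real B) / real (2 * B) = real k / 2"
    using \<open>1 \<le> B\<close> by simp
  moreover have "(1/4) ^ Suc B * (real k * (real B + 2)) \<le> real k / 2"
    using two_mult_add_two_le_four_power[of B] by (simp add: power_one_over divide_simps mult_left_mono)
  moreover have "(1/4) ^ Suc B * log 2 (card A / B) \<le> (1/4) ^ Suc B * (real k * (real B + 2))"
    using log_le by (simp add: mult_left_mono)
  ultimately show ?thesis
    by linarith
qed

theorem proposition10:
  shows "\<exists>c>0. \<exists>C>0. \<forall>(A::nat set) (B::nat) (T::nat) alg.
    finite A \<longrightarrow> 1 \<le> B \<longrightarrow> B \<le> card A \<longrightarrow> valid_alg A B alg \<longrightarrow>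
    real T \<ge> C * (log 2 (real (card A)) - log 2 (real B)) \<longrightarrow>
    worst_regret A alg T \<ge> c * (1/4) ^ B * (log 2 (real (card A)) - log 2 (real B))"
proof (rule exI[of _ "1/4"], intro conjI exI[of _ 1] allI impI)
  fix A :: "nat set" and B T :: nat and alg
  assume A: "finite A" and B: "1 \<le> B" "B \<le> card A" and alg: "valid_alg A B alg"
    and T: "1 * (log 2 (real (card A)) - log 2 (real B)) \<le> real T"
  have log_ratio: "log 2 (real (card A)) - log 2 (real B) = log 2 (card A / B)"
    using B by (simp add: log_divide)
  consider "card A = B" | "B < card A" "card A < 2 * B" | "2 * B \<le> card A"
    using B by linarith
  then have "(1/4) ^ Suc B * log 2 (card A / B) \<le> worst_regret A alg T"
  proof cases
    case 1
    moreover have "A \<noteq> {}"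
      using B by auto
    ultimately show ?thesis
      using worst_regret_nonneg[OF alg A B(1)] B(1) by simp
  next
    case 2
    then show ?thesis
      using worst_regret_ge_log_few_arms[OF alg A B(1)] T log_ratio by simp
  next
    case 3
    then show ?thesis
      using worst_regret_ge_log_many_arms[OF alg A B(1)] T log_ratio by simp
  qed
  then show "1/4 * (1/4) ^ B * (log 2 (real (card A)) - log 2 (real B)) \<le> worst_regret A alg T"
    using log_ratio by simp
qed (simp_all)

end
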